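(* Let $A=\{a_1,\dots,a_{3k}\}$ be an instance of 3-PARTITION with $a^2$ divisible by $7$, and let $G(A)$ be the bipartite network constructed from $A$ as described in the context. In any division of $G(A)$ with maximal bipartite modularity, none of the stars $X_1,\dots,X_{3k}$ and $Y_1,\dots,Y_{3k}$ is divided (i.e., all vertices of each star lie in a single community).
   Context: An instance of 3-PARTITION is a set of $3k$ positive integers $A=\{a_1,\dots,a_{3k}\}$ such that $a=\sum_{i=1}^{3k}a_i=kb$ and $b/4<a_i<b/2$ for all $i$, for some integer $b$. The bipartite network $G(A)$ (vertices colored red/blue, every edge joining a red and a blue vertex) is built as follows. (1) Construct $k$ complete bipartite networks (bicliques) $K_1,\dots,K_k$, each with $a$ red and $a$ blue vertices. (2) For each $i=1,\dots,3k$ add a red vertex $x_i$ and a blue vertex $y_i$ (element vertices). (3) For each $i$, connect $x_i$ to $a_i$ blue vertices in each of the $k$ bicliques, in such a way that each blue vertex of every biclique is adjacent to exactly one red element vertex; similarly connect $y_i$ to $a_i$ red vertices in each biclique so that each red vertex of every biclique is adjacent to exactly one blue element vertex. (4) For each $i$, add the edge $x_iy_i$. (5) For each $i$, construct a star $X_i$ with one blue internal vertex and $a^2/7$ red leaves, and a star $Y_i$ with one red internal vertex and $a^2/7$ blue leaves. (6) For each $i$, connect $x_i$ to the internal vertex of $X_i$ and $y_i$ to the internal vertex of $Y_i$. A division of the vertex set is a partition into communities. With $m$ the number of edges, Barber's bipartite modularity is $Q_b(\mathcal{C})=\sum_{C\in\mathcal{C}}\left(\frac{m_C}{m}-\frac{R_CB_C}{m^2}\right)$,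 where $m_C$ is the number of edges inside $C$ and $R_C$ (resp. $B_C$) is the sum of degrees of red (resp. blue) vertices in $C$. A division with maximal bipartite modularity is one maximizing $Q_b$ over all divisions. *)

theory Defs
  imports Complex_Main "HOL-Library.Disjoint_Sets"
begin

text \<open>The 3k integers are given as a function as indexed by 0..3k-1 (so repeated
values are allowed, as in a multiset). b is the target sum.\<close>

definition three_partition_instance :: "nat \<Rightarrow> (nat \<Rightarrow> nat) \<Rightarrow> nat \<Rightarrow> bool" where
  "three_partition_instance k as b \<longleftrightarrow>
     (\<forall>i<3*k. as i > 0) \<and>
     (\<Sum>i<3*k. as i) = k * b \<and>
     (\<forall>i<3*k. real b / 4 < real (as i) \<and> real (as i) < real b / 2)"

definition total :: "nat \<Rightarrow> (nat \<Rightarrow> nat) \<Rightarrow> nat" where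
  "total k as = (\<Sum>i<3*k. as i)"

text \<open>A bipartite network is a vertex set V, a red/blue colouring (predicate isred),
and a set of edges given as pairs (red endpoint, blue endpoint).\<close>

definition edges_in :: "('v \<times> 'v) set \<Rightarrow> 'v set \<Rightarrow> nat" where
  "edges_in E C = card {e \<in> E. fst e \<in> C \<and> snd e \<in> C}"

definition degree :: "('v \<times> 'v) set \<Rightarrow> 'v \<Rightarrow> nat" where
  "degree E v = card {e \<in> E. fst e = v \<or> snd e = v}"

definition red_degree_sum :: "('v \<Rightarrow> bool) \<Rightarrow> ('v \<times> 'v) set \<Rightarrow> 'v set \<Rightarrow> nat" where
  "red_degree_sum isred E C = (\<Sum>v\<in>{v\<in>C. isred v}. degree E v)"

definition blue_degree_sum :: "('v \<Rightarrow> bool) \<Rightarrow> ('v \<times> 'v) set \<Rightarrow> 'v set \<Rightarrow> nat" where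
  "blue_degree_sum isred E C = (\<Sum>v\<in>{v\<in>C. \<not> isred v}. degree E v)"

definition bip_modularity :: "('v \<Rightarrow> bool) \<Rightarrow> ('v \<times> 'v) set \<Rightarrow> 'v set set \<Rightarrow> real" where
  "bip_modularity isred E P =
     (\<Sum>C\<in>P. real (edges_in E C) / real (card E)
             - real (red_degree_sum isred E C) * real (blue_degree_sum isred E C) / (real (card E))^2)"

definition is_division :: "'v set \<Rightarrow> 'v set set \<Rightarrow> bool" where
  "is_division V P \<longleftrightarrow> partition_on V P"

definition max_modularity_division :: "'v set \<Rightarrow> ('v \<Rightarrow> bool) \<Rightarrow> ('v \<times> 'v) set \<Rightarrow> 'v set set \<Rightarrow> bool" where
  "max_modularity_division V isred E P \<longleftrightarrow>
     is_division V P \<and> (\<forall>P'. is_division V P' \<longrightarrow> bip_modularity isred E P' \<le> bip_modularity isred E P)"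

text \<open>Vertices: KR t j / KB t j are the red / blue vertex j (j < a) of biclique K_t (t < k);
XE i / YE i are x_i / y_i; XC i (blue) and XL i l (red leaves) form the star X_i;
YC i (red) and YL i l (blue leaves) form the star Y_i; l < a^2/7.\<close>

datatype vtx = KR nat nat | KB nat nat | XE nat | YE nat
  | XC nat | XL nat nat | YC nat | YL nat nat

fun is_red :: "vtx \<Rightarrow> bool" where
  "is_red (KR _ _) = True" | "is_red (KB _ _) = False"
| "is_red (XE _) = True" | "is_red (YE _) = False"
| "is_red (XC _) = False" | "is_red (XL _ _) = True"
| "is_red (YC _) = True" | "is_red (YL _ _) = False"

definition G_vertices :: "nat \<Rightarrow> (nat \<Rightarrow> nat) \<Rightarrow> vtx set" where
  "G_vertices k as = (let a = total k as; s = a^2 div 7 in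
      {KR t j | t j. t < k \<and> j < a} \<union> {KB t j | t j. t < k \<and> j < a}
    \<union> {XE i | i. i < 3*k} \<union> {YE i | i. i < 3*k}
    \<union> {XC i | i. i < 3*k} \<union> {XL i l | i l. i < 3*k \<and> l < s}
    \<union> {YC i | i. i < 3*k} \<union> {YL i l | i l. i < 3*k \<and> l < s})"

text \<open>f t j = index i of the red element vertex x_i adjacent to blue vertex j of biclique t;
g t j = index i of the blue element vertex y_i adjacent to red vertex j of biclique t.\<close>

definition valid_assignment :: "nat \<Rightarrow> (nat \<Rightarrow> nat) \<Rightarrow> (nat \<Rightarrow> nat \<Rightarrow> nat) \<Rightarrow> bool" where
  "valid_assignment k as f \<longleftrightarrow>
     (\<forall>t<k. \<forall>j<total k as. f t j < 3*k) \<and>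
     (\<forall>t<k. \<forall>i<3*k. card {j. j < total k as \<and> f t j = i} = as i)"

definition G_edges :: "nat \<Rightarrow> (nat \<Rightarrow> nat) \<Rightarrow> (nat \<Rightarrow> nat \<Rightarrow> nat) \<Rightarrow> (nat \<Rightarrow> nat \<Rightarrow> nat)
    \<Rightarrow> (vtx \<times> vtx) set" where
  "G_edges k as f g = (let a = total k as; s = a^2 div 7 in
      {(KR t j, KB t j') | t j j'. t < k \<and> j < a \<and> j' < a}
    \<union> {(XE (f t j), KB t j) | t j. t < k \<and> j < a}
    \<union> {(KR t j, YE (g t j)) | t j. t < k \<and> j < a}
    \<union> {(XE i, YE i) | i. i < 3*k}
    \<union> {(XL i l, XC i) | i l. i < 3*k \<and> l < s}
    \<union> {(YC i, YL i l) | i l. i < 3*k \<and> l < s}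
    \<union> {(XE i, XC i) | i. i < 3*k}
    \<union> {(YC i, YE i) | i. i < 3*k})"

definition star_X :: "nat \<Rightarrow> (nat \<Rightarrow> nat) \<Rightarrow> nat \<Rightarrow> vtx set" where
  "star_X k as i = {XC i} \<union> {XL i l | l. l < (total k as)^2 div 7}"

definition star_Y :: "nat \<Rightarrow> (nat \<Rightarrow> nat) \<Rightarrow> nat \<Rightarrow> vtx set" where
  "star_Y k as i = {YC i} \<union> {YL i l | l. l < (total k as)^2 div 7}"

end

theory Submission
  imports Defs
begin

text \<open>A leaf \<open>l\<close> of a star has a single edge, to the centre \<open>c\<close>. If a division of maximal
  modularity separated \<open>l\<close> from the community \<open>C\<close> of \<open>c\<close>, moving \<open>l\<close> into \<open>C\<close> would change
  the modularity by \<open>(m - B\<^sub>C + B\<^sub>C\<^sub>') / m\<^sup>2\<close>, where \<open>B\<close> is the blue degree sum; maximality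
  forces \<open>B\<^sub>C = m\<close>, i.e. every edge has its blue end in \<open>C\<close>, and then every community
  contributes at most \<open>0\<close>. But splitting off \<open>{l, c}\<close> already yields positive modularity
  as soon as some edge has a blue end other than \<open>c\<close>. Stars with blue leaves are treated by swapping
  the colours.\<close>

text \<open>Vertex \<open>x\<close> joins the community of \<open>c\<close>: taking preimages under \<open>id(x := c)\<close> adds \<open>x\<close> to the
  block of \<open>c\<close> and removes it from every other block, so \<open>partition_on_vimage\<close> applies.\<close>

definition move_vertex :: "'a \<Rightarrow> 'a \<Rightarrow> 'a set set \<Rightarrow> 'a set set" where
  "move_vertex x c P = (\<lambda>D. (id(x := c)) -` D) ` P - {{}}"

lemma vimage_id_fun_upd: "id(x := c) -` D = (if c \<in> D then insert x D else D - {x})"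
  by (auto split: if_splits)

lemma partition_on_move_vertex:
  assumes "partition_on V P" "x \<in> V" "c \<in> V"
  shows "partition_on V (move_vertex x c P)"
proof -
  have "id(x := c) -` V = V" using assms(2,3) by (auto simp: vimage_id_fun_upd)
  then show ?thesis
    using partition_on_vimage[OF assms(1), of "id(x := c)"] by (simp add: move_vertex_def)
qed

lemma partition_on_same_block:
  assumes "partition_on V P" "D \<in> P" "D' \<in> P" "y \<in> D" "y \<in> D'"
  shows "D = D'"
  using assms partition_onD2 disjointD by blast

lemma inj_on_vimage_id_fun_upd:
  assumes P: "partition_on V P"
  shows "inj_on (\<lambda>D. id(x := c) -` D) P"
proof (rule inj_onI)
  fix D D' assume D: "D \<in> P" "D' \<in> P" "id(x := c) -` D = id(x := c) -` D'"
  have away_from_x: "id(x := c) -` A - {x} = A - {x}" for A by auto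
  have eq: "D - {x} = D' - {x}"
    using away_from_x[of D] away_from_x[of D'] D(3) by simp
  show "D = D'"
  proof (cases "D - {x} = {}")
    case True
    moreover have "D \<noteq> {}" "D' \<noteq> {}" using partition_onD3[OF P] D(1,2) by auto
    ultimately have "D = {x}" "D' = {x}" using eq by auto
    then show ?thesis by simp
  next
    case False
    then show ?thesis using eq partition_on_same_block[OF P D(1,2)] by blast
  qed
qed

lemma sum_move_vertex:
  fixes f :: "'a set \<Rightarrow> 'b::ab_group_add"
  assumes P: "partition_on V P" "finite P"
    and C: "C \<in> P" "c \<in> C" and C': "C' \<in> P" "x \<in> C'" and "C \<noteq> C'"
    and "f {} = 0"
  shows "sum f (move_vertex x c P) = sum f P - f C - f C' + f (insert x C) + f (C' - {x})"
proof -
  define g where "g D = id(x := c) -` D" for D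
  have same: "\<And>D D' y. D \<in> P \<Longrightarrow> D' \<in> P \<Longrightarrow> y \<in> D \<Longrightarrow> y \<in> D' \<Longrightarrow> D = D'"
    using partition_on_same_block[OF P(1)] by blast
  have c_notin_C': "c \<notin> C'"
    using same C C' \<open>C \<noteq> C'\<close> by blast
  have g_other: "g D = D" if "D \<in> P - {C, C'}" for D
  proof -
    have "x \<notin> D" "c \<notin> D" using that same C C' by blast+
    then show ?thesis unfolding g_def vimage_id_fun_upd by auto
  qed
  have "inj_on g P"
    unfolding g_def by (rule inj_on_vimage_id_fun_upd[OF P(1)])
  have g_C: "g C = insert x C" and g_C': "g C' = C' - {x}"
    using C(2) c_notin_C' unfolding g_def vimage_id_fun_upd by auto
  have split_off: "sum h P = h C + h C' + sum h (P - {C, C'})" for h :: "'a set \<Rightarrow> 'b"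
  proof -
    have "sum h P = h C + sum h (P - {C})" by (rule sum.remove[OF P(2) C(1)])
    also have "sum h (P - {C}) = h C' + sum h (P - {C} - {C'})"
      by (rule sum.remove) (use P(2) C'(1) \<open>C \<noteq> C'\<close> in auto)
    finally show ?thesis by (simp add: Diff_insert2 [symmetric] add.assoc)
  qed
  have "sum f (move_vertex x c P) = sum f (g ` P)"
    unfolding move_vertex_def g_def[symmetric] using \<open>finite P\<close> \<open>f {} = 0\<close>
    by (simp add: sum_diff1)
  also have "\<dots> = sum (f \<circ> g) P"
    by (rule sum.reindex[OF \<open>inj_on g P\<close>])
  also have "\<dots> = f (insert x C) + f (C' - {x}) + sum f (P - {C, C'})"
    using split_off[of "f \<circ> g"] g_other g_C g_C' by simp
  also have "sum f (P - {C, C'}) = sum f P - f C - f C'"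
    using split_off[of f] by simp
  finally show ?thesis by simp
qed

definition community_modularity :: "('v \<Rightarrow> bool) \<Rightarrow> ('v \<times> 'v) set \<Rightarrow> 'v set \<Rightarrow> real" where
  "community_modularity isred E C = real (edges_in E C) / real (card E)
     - real (red_degree_sum isred E C) * real (blue_degree_sum isred E C) / (real (card E))^2"

lemma bip_modularity_eq_sum: "bip_modularity isred E P = (\<Sum>C\<in>P. community_modularity isred E C)"
  by (simp add: bip_modularity_def community_modularity_def)

lemma bip_modularity_swap:
  "bip_modularity (Not \<circ> isred) (prod.swap ` E) P = bip_modularity isred E P"
proof -
  have swap_set: "{e \<in> prod.swap ` E. Q e} = prod.swap ` {e \<in> E. Q (prod.swap e)}" for Q
    by auto
  have edges: "edges_in (prod.swap ` E) C = edges_in E C" for C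
    unfolding edges_in_def swap_set by (auto simp: card_image conj_commute intro: arg_cong[where f = card])
  have degree: "degree (prod.swap ` E) v = degree E v" for v
    unfolding degree_def swap_set by (auto simp: card_image disj_commute intro: arg_cong[where f = card])
  have "card (prod.swap ` E) = card E" by (simp add: card_image)
  then show ?thesis
    unfolding bip_modularity_def red_degree_sum_def blue_degree_sum_def edges degree
    by (simp add: mult.commute)
qed

lemma max_modularity_division_swap:
  "max_modularity_division V (Not \<circ> isred) (prod.swap ` E) P \<longleftrightarrow> max_modularity_division V isred E P"
  by (simp add: max_modularity_division_def bip_modularity_swap)

locale bipartite_network =
  fixes V :: "'v set" and isred :: "'v \<Rightarrow> bool" and E :: "('v \<times> 'v) set"
  assumes finite_vertices: "finite V"
    and edges_subset: "E \<subseteq> V \<times> V"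
    and red_blue: "\<And>e. e \<in> E \<Longrightarrow> isred (fst e) \<and> \<not> isred (snd e)"
begin

lemma bipartite_network_swap: "bipartite_network V (Not \<circ> isred) (prod.swap ` E)"
  by unfold_locales (use finite_vertices edges_subset red_blue in auto)

lemma finite_edges: "finite E"
  using finite_vertices edges_subset by (meson finite_SigmaI finite_subset)

lemma red_degree_sum_eq_card:
  assumes "finite C"
  shows "red_degree_sum isred E C = card {e \<in> E. fst e \<in> C}"
proof -
  have "red_degree_sum isred E C = (\<Sum>v\<in>{v \<in> C. isred v}. card {e \<in> E. fst e = v})"
    unfolding red_degree_sum_def degree_def
    using red_blue by (intro sum.cong refl arg_cong[where f = card]) auto
  also have "\<dots> = card (\<Union>v\<in>{v \<in> C. isred v}. {e \<in> E. fst e = v})"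
    by (rule card_UN_disjoint[symmetric]) (use assms finite_edges in auto)
  also have "(\<Union>v\<in>{v \<in> C. isred v}. {e \<in> E. fst e = v}) = {e \<in> E. fst e \<in> C}"
    using red_blue by auto
  finally show ?thesis .
qed

lemma blue_degree_sum_eq_card:
  assumes "finite C"
  shows "blue_degree_sum isred E C = card {e \<in> E. snd e \<in> C}"
proof -
  have "blue_degree_sum isred E C = (\<Sum>v\<in>{v \<in> C. \<not> isred v}. card {e \<in> E. snd e = v})"
    unfolding blue_degree_sum_def degree_def
    using red_blue by (intro sum.cong refl arg_cong[where f = card]) auto
  also have "\<dots> = card (\<Union>v\<in>{v \<in> C. \<not> isred v}. {e \<in> E. snd e = v})"
    by (rule card_UN_disjoint[symmetric]) (use assms finite_edges in auto)
  also have "(\<Union>v\<in>{v \<in> C. \<not> isred v}. {e \<in> E. snd e = v}) = {e \<in> E. snd e \<in> C}"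
    using red_blue by auto
  finally show ?thesis .
qed

lemma community_modularity_eq:
  assumes "finite C"
  shows "community_modularity isred E C = real (edges_in E C) / real (card E)
     - real (card {e \<in> E. fst e \<in> C}) * real (card {e \<in> E. snd e \<in> C}) / (real (card E))^2"
  unfolding community_modularity_def red_degree_sum_eq_card[OF assms] blue_degree_sum_eq_card[OF assms] ..

lemma edges_in_le_red: "edges_in E C \<le> card {e \<in> E. fst e \<in> C}"
  unfolding edges_in_def by (rule card_mono) (use finite_edges in auto)

lemma edges_in_le_blue: "edges_in E C \<le> card {e \<in> E. snd e \<in> C}"
  unfolding edges_in_def by (rule card_mono) (use finite_edges in auto)

lemma finite_block: "partition_on V P \<Longrightarrow> D \<in> P \<Longrightarrow> finite D"
  using finite_vertices partition_onD1 by (metis Union_upper finite_subset)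

lemma bip_modularity_nonpos_if_blue_ends_in_block:
  assumes P: "partition_on V P" and C: "C \<in> P"
    and blue_ends: "card {e \<in> E. snd e \<in> C} = card E"
  shows "bip_modularity isred E P \<le> 0"
proof -
  have all_in_C: "{e \<in> E. snd e \<in> C} = E"
    using blue_ends finite_edges by (metis (no_types, lifting) card_subset_eq mem_Collect_eq subsetI)
  have "community_modularity isred E D \<le> 0" if D: "D \<in> P" for D
  proof (cases "D = C")
    case True
    have "community_modularity isred E C
        = (real (edges_in E C) - real (card {e \<in> E. fst e \<in> C})) / real (card E)"
      unfolding community_modularity_eq[OF finite_block[OF P C]] blue_ends
      by (simp add: power2_eq_square diff_divide_distrib)
    also have "\<dots> \<le> 0"
      using edges_in_le_red by (simp add: divide_nonpos_nonneg)
    finally show ?thesis using True by simp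
  next
    case False
    then have "C \<inter> D = {}"
      using partition_on_same_block[OF P C D] by blast
    then have "{e \<in> E. snd e \<in> D} = {}" using all_in_C by blast
    then have "card {e \<in> E. snd e \<in> D} = 0" by (simp only: card.empty)
    moreover have "edges_in E D \<le> card {e \<in> E. snd e \<in> D}" by (rule edges_in_le_blue)
    ultimately show ?thesis
      unfolding community_modularity_eq[OF finite_block[OF P D]] by simp
  qed
  then show ?thesis
    unfolding bip_modularity_eq_sum by (rule sum_nonpos)
qed

lemma community_modularity_move_leaf:
  assumes leaf: "(l, c) \<in> E" "\<forall>e\<in>E. fst e = l \<longrightarrow> e = (l, c)"
    and fin: "finite C" "finite C'"
    and C: "c \<in> C" "l \<notin> C" and C': "l \<in> C'" "c \<notin> C'"
  shows "community_modularity isred E (insert l C) + community_modularity isred E (C' - {l})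
       - community_modularity isred E C - community_modularity isred E C'
     = (real (card E) - real (card {e \<in> E. snd e \<in> C}) + real (card {e \<in> E. snd e \<in> C'}))
       / (real (card E))^2"
proof -
  have not_blue_end: "snd e \<noteq> l" if "e \<in> E" for e
    using red_blue[OF that] red_blue[OF leaf(1)] by auto
  have red_end: "fst e = l \<longleftrightarrow> e = (l, c)" if "e \<in> E" for e
    using leaf(2) that by (metis fst_conv)
  have "{e \<in> E. fst e \<in> insert l C \<and> snd e \<in> insert l C}
      = insert (l, c) {e \<in> E. fst e \<in> C \<and> snd e \<in> C}"
    using leaf(1) C(1) red_end not_blue_end by fastforce
  then have edges_gain: "edges_in E (insert l C) = edges_in E C + 1"
    unfolding edges_in_def using C(2) finite_edges by simp
  have "{e \<in> E. fst e \<in> C' - {l} \<and> snd e \<in> C' - {l}} = {e \<in> E. fst e \<in> C' \<and> snd e \<in> C'}"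
    using C'(2) red_end not_blue_end by fastforce
  then have edges_keep: "edges_in E (C' - {l}) = edges_in E C'"
    unfolding edges_in_def by simp
  have "{e \<in> E. fst e \<in> insert l C} = insert (l, c) {e \<in> E. fst e \<in> C}"
    using leaf(1) red_end by fastforce
  then have red_gain: "card {e \<in> E. fst e \<in> insert l C} = card {e \<in> E. fst e \<in> C} + 1"
    using C(2) finite_edges by simp
  have "{e \<in> E. fst e \<in> C'} = insert (l, c) {e \<in> E. fst e \<in> C' - {l}}"
    using leaf(1) C'(1) red_end by fastforce
  then have red_loss: "card {e \<in> E. fst e \<in> C'} = card {e \<in> E. fst e \<in> C' - {l}} + 1"
    using finite_edges by simp
  have blue_keep: "{e \<in> E. snd e \<in> insert l C} = {e \<in> E. snd e \<in> C}"
    "{e \<in> E. snd e \<in> C' - {l}} = {e \<in> E. snd e \<in> C'}"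
    using not_blue_end by auto
  have "card E > 0"
    using leaf(1) finite_edges card_gt_0_iff by blast
  moreover have "finite (insert l C)" "finite (C' - {l})" using fin by auto
  ultimately show ?thesis
    unfolding community_modularity_eq[OF fin(1)] community_modularity_eq[OF fin(2)]
      community_modularity_eq[OF \<open>finite (insert l C)\<close>] community_modularity_eq[OF \<open>finite (C' - {l})\<close>]
      edges_gain edges_keep red_gain red_loss blue_keep
    by (simp add: field_simps power2_eq_square)
qed

lemma bip_modularity_split_off_leaf_edge:
  assumes leaf: "(l, c) \<in> E" "\<forall>e\<in>E. fst e = l \<longrightarrow> e = (l, c)"
  defines "S \<equiv> {l, c}"
  shows "bip_modularity isred E {S, V - S}
    = 2 * (real (card E) - real (card {e \<in> E. snd e \<in> S})) / (real (card E))^2"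
proof -
  define m where "m = card E"
  define b where "b = card {e \<in> E. snd e \<in> S}"
  have S_sub: "S \<subseteq> V" using leaf(1) edges_subset unfolding S_def by force
  have red_in_S: "{e \<in> E. fst e \<in> S} = {(l, c)}"
    using leaf red_blue[OF leaf(1)] red_blue unfolding S_def by fastforce
  have "{e \<in> E. fst e \<in> S \<and> snd e \<in> S} = {e \<in> {e \<in> E. fst e \<in> S}. snd e \<in> S}"
    by auto
  also have "\<dots> = {(l, c)}" unfolding red_in_S by (auto simp: S_def)
  finally have c_S: "edges_in E S = 1" "card {e \<in> E. fst e \<in> S} = 1" "card {e \<in> E. snd e \<in> S} = b"
    unfolding edges_in_def b_def red_in_S by simp_all
  have fst_in_S: "fst e \<in> S \<longleftrightarrow> e = (l, c)" if "e \<in> E" for e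
    using red_in_S that by blast
  have c_in_S: "c \<in> S" unfolding S_def by simp
  have "{e \<in> E. fst e \<in> V - S \<and> snd e \<in> V - S} = E - {e \<in> E. snd e \<in> S}"
    "{e \<in> E. fst e \<in> V - S} = E - {(l, c)}"
    "{e \<in> E. snd e \<in> V - S} = E - {e \<in> E. snd e \<in> S}"
    using fst_in_S c_in_S edges_subset by fastforce+
  then have c_rest: "edges_in E (V - S) = m - b" "card {e \<in> E. fst e \<in> V - S} = m - 1"
    "card {e \<in> E. snd e \<in> V - S} = m - b"
    unfolding edges_in_def m_def b_def using leaf(1) finite_edges by (simp_all add: card_Diff_subset)
  have "b \<le> m"
    unfolding b_def m_def by (rule card_mono[OF finite_edges]) auto
  have "0 < m"
    unfolding m_def using leaf(1) finite_edges by (auto simp: card_gt_0_iff)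
  have fin_S: "finite S" and fin_rest: "finite (V - S)"
    using finite_vertices S_sub by (auto intro: finite_subset)
  have "S \<noteq> V - S" unfolding S_def by blast
  then have "bip_modularity isred E {S, V - S}
      = community_modularity isred E S + community_modularity isred E (V - S)"
    unfolding bip_modularity_eq_sum by simp
  also have "\<dots> = 2 * (real m - real b) / (real m)^2"
    using \<open>b \<le> m\<close> \<open>0 < m\<close> unfolding community_modularity_eq[OF fin_S] community_modularity_eq[OF fin_rest]
      c_S c_rest m_def[symmetric]
    by (simp add: of_nat_diff field_simps power2_eq_square)
  finally show ?thesis unfolding m_def b_def .
qed

lemma exists_division_with_positive_modularity:
  assumes leaf: "(l, c) \<in> E" "\<forall>e\<in>E. fst e = l \<longrightarrow> e = (l, c)"
    and other: "e\<^sub>0 \<in> E" "snd e\<^sub>0 \<noteq> c"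
  shows "\<exists>P. partition_on V P \<and> bip_modularity isred E P > 0"
proof -
  define S where "S = {l, c}"
  have l_red: "isred l" and e\<^sub>0_blue: "\<not> isred (snd e\<^sub>0)"
    using red_blue[OF leaf(1)] red_blue[OF other(1)] by auto
  have "S \<subseteq> V" using leaf(1) edges_subset unfolding S_def by force
  moreover have "snd e\<^sub>0 \<in> V - S"
    using other edges_subset l_red e\<^sub>0_blue unfolding S_def by force
  ultimately have part: "partition_on V {S, V - S}"
    by (intro partition_onI) (auto simp: disjnt_def S_def)
  have "e\<^sub>0 \<notin> {e \<in> E. snd e \<in> S}"
    using other l_red e\<^sub>0_blue unfolding S_def by auto
  then have "{e \<in> E. snd e \<in> S} \<subset> E" using other(1) by blast
  then have "card {e \<in> E. snd e \<in> S} < card E" by (rule psubset_card_mono[OF finite_edges])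
  then have "bip_modularity isred E {S, V - S} > 0"
    unfolding S_def bip_modularity_split_off_leaf_edge[OF leaf] by simp
  with part show ?thesis by (intro exI[of _ "{S, V - S}"] conjI)
qed

lemma community_modularity_empty: "community_modularity isred E {} = 0"
  by (simp add: community_modularity_def edges_in_def red_degree_sum_def blue_degree_sum_def)

lemma bip_modularity_move_leaf:
  assumes P: "partition_on V P"
    and leaf: "(l, c) \<in> E" "\<forall>e\<in>E. fst e = l \<longrightarrow> e = (l, c)"
    and C: "C \<in> P" "c \<in> C" and C': "C' \<in> P" "l \<in> C'" and "C \<noteq> C'"
  shows "bip_modularity isred E (move_vertex l c P) = bip_modularity isred E P
     + (real (card E) - real (card {e \<in> E. snd e \<in> C}) + real (card {e \<in> E. snd e \<in> C'}))
       / (real (card E))^2"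
proof -
  define Q where "Q = community_modularity isred E"
  have "l \<notin> C" "c \<notin> C'"
    using partition_on_same_block[OF P C(1) C'(1)] C C' \<open>C \<noteq> C'\<close> by blast+
  have "finite P" using finite_vertices P by (rule finite_elements)
  have "bip_modularity isred E (move_vertex l c P) = sum Q P - Q C - Q C' + Q (insert l C) + Q (C' - {l})"
    unfolding bip_modularity_eq_sum Q_def
    by (rule sum_move_vertex[OF P \<open>finite P\<close> C C' \<open>C \<noteq> C'\<close>]) (rule community_modularity_empty)
  then show ?thesis
    using community_modularity_move_leaf[OF leaf finite_block[OF P C(1)] finite_block[OF P C'(1)]
        C(2) \<open>l \<notin> C\<close> C'(2) \<open>c \<notin> C'\<close>]
    unfolding bip_modularity_eq_sum Q_def by simp
qed

lemma leaf_in_block_of_neighbour: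
  assumes max: "max_modularity_division V isred E P"
    and leaf: "(l, c) \<in> E" "\<forall>e\<in>E. fst e = l \<longrightarrow> e = (l, c)"
    and other: "e\<^sub>0 \<in> E" "snd e\<^sub>0 \<noteq> c"
    and C: "C \<in> P" "c \<in> C"
  shows "l \<in> C"
proof (rule ccontr)
  assume "l \<notin> C"
  have P: "partition_on V P"
    and P_max: "\<And>P'. partition_on V P' \<Longrightarrow> bip_modularity isred E P' \<le> bip_modularity isred E P"
    using max unfolding max_modularity_division_def is_division_def by auto
  have lc_in_V: "l \<in> V" "c \<in> V" using leaf(1) edges_subset by auto
  obtain C' where C': "C' \<in> P" "l \<in> C'"
    using partition_onD1[OF P] lc_in_V(1) by blast
  have "C \<noteq> C'" using C' \<open>l \<notin> C\<close> by blast
  define m where "m = real (card E)"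
  define B where "B D = real (card {e \<in> E. snd e \<in> D})" for D
  have "(m - B C + B C') / m^2 \<le> 0"
    using P_max[OF partition_on_move_vertex[OF P lc_in_V]]
      bip_modularity_move_leaf[OF P leaf C C' \<open>C \<noteq> C'\<close>]
    unfolding m_def B_def by simp
  moreover have "m > 0"
    unfolding m_def using leaf(1) finite_edges card_gt_0_iff by fastforce
  ultimately have "B C \<ge> m" unfolding B_def by (simp add: divide_le_0_iff)
  moreover have "B C \<le> m"
    unfolding B_def m_def by (simp add: card_mono finite_edges)
  ultimately have "card {e \<in> E. snd e \<in> C} = card E"
    unfolding B_def m_def by simp
  then have "bip_modularity isred E P \<le> 0"
    by (rule bip_modularity_nonpos_if_blue_ends_in_block[OF P C(1)])
  moreover obtain P\<^sub>0 where "partition_on V P\<^sub>0" "bip_modularity isred E P\<^sub>0 > 0"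
    using exists_division_with_positive_modularity[OF leaf other] by blast
  ultimately show False using P_max by fastforce
qed

lemma star_in_one_block:
  assumes max: "max_modularity_division V isred E P" and "c \<in> V"
    and leaves: "\<And>l. l \<in> L \<Longrightarrow> (l, c) \<in> E \<and> (\<forall>e\<in>E. fst e = l \<longrightarrow> e = (l, c))"
    and other: "e\<^sub>0 \<in> E" "snd e\<^sub>0 \<noteq> c"
  shows "\<exists>C\<in>P. insert c L \<subseteq> C"
proof -
  have "partition_on V P"
    using max unfolding max_modularity_division_def is_division_def by simp
  then obtain C where C: "C \<in> P" "c \<in> C"
    using \<open>c \<in> V\<close> partition_onD1 by blast
  have "L \<subseteq> C"
    using leaf_in_block_of_neighbour[OF max _ _ other C] leaves by blast
  with C show ?thesis by blast
qed

end

lemma bipartite_network_G: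
  assumes "valid_assignment k as f" "valid_assignment k as g"
  shows "bipartite_network (G_vertices k as) is_red (G_edges k as f g)"
proof
  show "finite (G_vertices k as)"
    unfolding G_vertices_def Let_def by (simp add: finite_image_set2 finite_image_set)
  show "G_edges k as f g \<subseteq> G_vertices k as \<times> G_vertices k as"
    using assms unfolding G_edges_def G_vertices_def Let_def valid_assignment_def by auto
  show "is_red (fst e) \<and> \<not> is_red (snd e)" if "e \<in> G_edges k as f g" for e
    using that unfolding G_edges_def Let_def by auto
qed

lemma XL_leaf_of_XC:
  assumes "i < 3 * k" "l < (total k as)^2 div 7"
  shows "(XL i l, XC i) \<in> G_edges k as f g
    \<and> (\<forall>e\<in>G_edges k as f g. fst e = XL i l \<longrightarrow> e = (XL i l, XC i))"
  using assms unfolding G_edges_def Let_def by auto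

lemma YL_leaf_of_YC:
  assumes "i < 3 * k" "l < (total k as)^2 div 7"
  shows "(YC i, YL i l) \<in> G_edges k as f g
    \<and> (\<forall>e\<in>G_edges k as f g. snd e = YL i l \<longrightarrow> e = (YC i, YL i l))"
  using assms unfolding G_edges_def Let_def by auto

theorem lemma3:
  fixes k b :: nat and as :: "nat \<Rightarrow> nat" and f g :: "nat \<Rightarrow> nat \<Rightarrow> nat"
    and P :: "vtx set set"
  assumes "three_partition_instance k as b"
    and "7 dvd (total k as)^2"
    and "valid_assignment k as f"
    and "valid_assignment k as g"
    and "max_modularity_division (G_vertices k as) is_red (G_edges k as f g) P"
  shows "\<forall>i<3*k. (\<exists>C\<in>P. star_X k as i \<subseteq> C) \<and> (\<exists>C\<in>P. star_Y k as i \<subseteq> C)"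
proof (intro allI impI conjI)
  fix i assume i: "i < 3 * k"
  interpret G: bipartite_network "G_vertices k as" is_red "G_edges k as f g"
    using bipartite_network_G[OF assms(3,4)] .
  interpret G_swapped: bipartite_network "G_vertices k as" "Not \<circ> is_red" "prod.swap ` G_edges k as f g"
    by (rule G.bipartite_network_swap)
  have centres: "XC i \<in> G_vertices k as" "YC i \<in> G_vertices k as"
    using i unfolding G_vertices_def Let_def by auto
  have element_edge: "(XE i, YE i) \<in> G_edges k as f g" "(YE i, XE i) \<in> prod.swap ` G_edges k as f g"
    using i unfolding G_edges_def Let_def by auto
  have "\<exists>C\<in>P. insert (XC i) {XL i l | l. l < (total k as)^2 div 7} \<subseteq> C"
    by (rule G.star_in_one_block[OF assms(5) centres(1) _ element_edge(1)])
      (auto intro!: XL_leaf_of_XC[OF i])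
  then show "\<exists>C\<in>P. star_X k as i \<subseteq> C" unfolding star_X_def by simp
  have "max_modularity_division (G_vertices k as) (Not \<circ> is_red) (prod.swap ` G_edges k as f g) P"
    using assms(5) max_modularity_division_swap by blast
  then have "\<exists>C\<in>P. insert (YC i) {YL i l | l. l < (total k as)^2 div 7} \<subseteq> C"
    by (rule G_swapped.star_in_one_block[OF _ centres(2) _ element_edge(2)])
      (use YL_leaf_of_YC[OF i] in fastforce, simp)
  then show "\<exists>C\<in>P. star_Y k as i \<subseteq> C" unfolding star_Y_def by simp
qed

end
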